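(* For the discrete nonlinear Schrödinger system $$u_{1,0}-u_{0,1}-\frac{\alpha-\beta}{1+u_{0,0}v_{1,1}}\,u_{0,0}=0,\qquad v_{1,0}-v_{0,1}+\frac{\alpha-\beta}{1+u_{0,0}v_{1,1}}\,v_{1,1}=0,$$ the following is a symmetry: $$\frac{\partial u_{0,0}}{\partial t_1}=\frac{u_{-1,0}}{1+u_{-1,0}v_{1,0}},\qquad \frac{\partial v_{0,0}}{\partial t_1}=\frac{-v_{1,0}}{1+u_{-1,0}v_{1,0}},$$ and the following is an extended symmetry: $$\frac{\partial u_{0,0}}{\partial \tau}=\frac{n\,u_{-1,0}}{1+u_{-1,0}v_{1,0}},\qquad \frac{\partial v_{0,0}}{\partial \tau}=\frac{-n\,v_{1,0}}{1+u_{-1,0}v_{1,0}},\qquad \frac{\partial\alpha}{\partial\tau}=1.$$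
   Context: Unknowns $u,v$ on $\mathbb Z^2$, $u_{i,j}=u(n+i,m+j)$, similarly $v$; $\alpha\neq\beta$ constants. Shifts $\mathcal S:n\mapsto n+1$, $\mathcal T:m\mapsto m+1$. For a system $\boldsymbol Q(\boldsymbol u_{0,0},\boldsymbol u_{1,0},\boldsymbol u_{0,1},\boldsymbol u_{1,1};\alpha)=\boldsymbol 0$ with $\boldsymbol u=(u,v)$ and Jacobians $\mathrm Q_{(p,q)}=\partial\boldsymbol Q/\partial\boldsymbol u_{p,q}$: $\boldsymbol F(n,m,[\boldsymbol u])$ is a symmetry ($\partial_t\boldsymbol u_{0,0}=\boldsymbol F$) if $\mathrm Q_{(0,0)}\boldsymbol F+\mathrm Q_{(1,0)}\mathcal S(\boldsymbol F)+\mathrm Q_{(0,1)}\mathcal T(\boldsymbol F)+\mathrm Q_{(1,1)}\mathcal S\mathcal T(\boldsymbol F)=\boldsymbol 0$ on all solutions; $(\boldsymbol M,\xi)$ is an extended symmetry ($\partial_\tau\boldsymbol u_{0,0}=\boldsymbol M$, $\partial_\tau\alpha=\xi$) if $\mathrm Q_{(0,0)}\boldsymbol M+\mathrm Q_{(1,0)}\mathcal S(\boldsymbol M)+\mathrm Q_{(0,1)}\mathcal T(\boldsymbol M)+\mathrm Q_{(1,1)}\mathcal S\mathcal T(\boldsymbol M)+\xi\,\partial_\alpha\boldsymbol Q=\boldsymbol 0$ on all solutions. Here $\mathcal S^p\mathcal T^q(\boldsymbol F)$ is $\boldsymbol F$ with $n\to n+p$, $m\to m+q$ and all shifts of $\boldsymbol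 u$ shifted accordingly. *)

theory Defs
  imports "HOL-Analysis.Analysis"
begin

text \<open>Lattice fields: U, V :: int \<times> int \<Rightarrow> real, with U (n,m) = u(n,m).
  At lattice point (n,m), u_{i,j} = U (n+i, m+j).\<close>

definition Q1 :: "real \<Rightarrow> real \<Rightarrow> (int \<times> int \<Rightarrow> real) \<Rightarrow> (int \<times> int \<Rightarrow> real) \<Rightarrow> int \<Rightarrow> int \<Rightarrow> real" where
  "Q1 \<alpha> \<beta> U V n m = U (n+1, m) - U (n, m+1)
      - (\<alpha> - \<beta>) / (1 + U (n, m) * V (n+1, m+1)) * U (n, m)"

definition Q2 :: "real \<Rightarrow> real \<Rightarrow> (int \<times> int \<Rightarrow> real) \<Rightarrow> (int \<times> int \<Rightarrow> real) \<Rightarrow> int \<Rightarrow> int \<Rightarrow> real" where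
  "Q2 \<alpha> \<beta> U V n m = V (n+1, m) - V (n, m+1)
      + (\<alpha> - \<beta>) / (1 + U (n, m) * V (n+1, m+1)) * V (n+1, m+1)"

definition Qc :: "nat \<Rightarrow> real \<Rightarrow> real \<Rightarrow> (int \<times> int \<Rightarrow> real) \<Rightarrow> (int \<times> int \<Rightarrow> real) \<Rightarrow> int \<Rightarrow> int \<Rightarrow> real" where
  "Qc i = (if i = 0 then Q1 else Q2)"

definition is_solution :: "real \<Rightarrow> real \<Rightarrow> (int \<times> int \<Rightarrow> real) \<Rightarrow> (int \<times> int \<Rightarrow> real) \<Rightarrow> bool" where
  "is_solution \<alpha> \<beta> U V \<longleftrightarrow>
     (\<forall>n m. 1 + U (n, m) * V (n+1, m+1) \<noteq> 0 \<and> Q1 \<alpha> \<beta> U V n m = 0 \<and> Q2 \<alpha> \<beta> U V n m = 0)"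

definition dQ_du :: "nat \<Rightarrow> real \<Rightarrow> real \<Rightarrow> (int \<times> int \<Rightarrow> real) \<Rightarrow> (int \<times> int \<Rightarrow> real) \<Rightarrow> int \<Rightarrow> int \<Rightarrow> int \<Rightarrow> int \<Rightarrow> real" where
  "dQ_du i \<alpha> \<beta> U V n m p q =
     deriv (\<lambda>x. Qc i \<alpha> \<beta> (U((n+p, m+q) := x)) V n m) (U (n+p, m+q))"

definition dQ_dv :: "nat \<Rightarrow> real \<Rightarrow> real \<Rightarrow> (int \<times> int \<Rightarrow> real) \<Rightarrow> (int \<times> int \<Rightarrow> real) \<Rightarrow> int \<Rightarrow> int \<Rightarrow> int \<Rightarrow> int \<Rightarrow> real" where
  "dQ_dv i \<alpha> \<beta> U V n m p q =
     deriv (\<lambda>x. Qc i \<alpha> \<beta> U (V((n+p, m+q) := x)) n m) (V (n+p, m+q))"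

definition dQ_dalpha :: "nat \<Rightarrow> real \<Rightarrow> real \<Rightarrow> (int \<times> int \<Rightarrow> real) \<Rightarrow> (int \<times> int \<Rightarrow> real) \<Rightarrow> int \<Rightarrow> int \<Rightarrow> real" where
  "dQ_dalpha i \<alpha> \<beta> U V n m = deriv (\<lambda>a. Qc i a \<beta> U V n m) \<alpha>"

text \<open>i-th component of  Q_(0,0) F + Q_(1,0) S(F) + Q_(0,1) T(F) + Q_(1,1) ST(F)  at (n,m),
  where the flow F = (Fu, Fv) is given as its value at every lattice point
  (so S^p T^q (F) at (n,m) is the value at (n+p, m+q)).\<close>
definition linQ :: "nat \<Rightarrow> real \<Rightarrow> real \<Rightarrow> (int \<times> int \<Rightarrow> real) \<Rightarrow> (int \<times> int \<Rightarrow> real)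
     \<Rightarrow> (int \<times> int \<Rightarrow> real) \<Rightarrow> (int \<times> int \<Rightarrow> real) \<Rightarrow> int \<Rightarrow> int \<Rightarrow> real" where
  "linQ i \<alpha> \<beta> U V Fu Fv n m =
     (\<Sum>(p,q)\<in>{(0,0),(1,0),(0,1),(1,1)}.
        dQ_du i \<alpha> \<beta> U V n m p q * Fu (n+p, m+q) + dQ_dv i \<alpha> \<beta> U V n m p q * Fv (n+p, m+q))"

definition symF_u :: "(int \<times> int \<Rightarrow> real) \<Rightarrow> (int \<times> int \<Rightarrow> real) \<Rightarrow> int \<times> int \<Rightarrow> real" where
  "symF_u U V = (\<lambda>(k,l). U (k-1, l) / (1 + U (k-1, l) * V (k+1, l)))"

definition symF_v :: "(int \<times> int \<Rightarrow> real) \<Rightarrow> (int \<times> int \<Rightarrow> real) \<Rightarrow> int \<times> int \<Rightarrow> real" where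
  "symF_v U V = (\<lambda>(k,l). - V (k+1, l) / (1 + U (k-1, l) * V (k+1, l)))"

definition extM_u :: "(int \<times> int \<Rightarrow> real) \<Rightarrow> (int \<times> int \<Rightarrow> real) \<Rightarrow> int \<times> int \<Rightarrow> real" where
  "extM_u U V = (\<lambda>(k,l). of_int k * U (k-1, l) / (1 + U (k-1, l) * V (k+1, l)))"

definition extM_v :: "(int \<times> int \<Rightarrow> real) \<Rightarrow> (int \<times> int \<Rightarrow> real) \<Rightarrow> int \<times> int \<Rightarrow> real" where
  "extM_v U V = (\<lambda>(k,l). - of_int k * V (k+1, l) / (1 + U (k-1, l) * V (k+1, l)))"

end

theory Submission
  imports Defs
begin

text \<open>Split the linearised system at \<open>(n,m)\<close> into the part coming from the sites
  \<open>(n+1,\<cdot>)\<close> (the \<open>\<S>\<close>-shifted Jacobians) and the part coming from the sites \<open>(n,\<cdot>)\<close>.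
  Evaluated on the symmetry flow of a solution, the first part equals \<open>-\<partial>\<^sub>\<alpha>Q\<close> and the
  second \<open>\<partial>\<^sub>\<alpha>Q\<close>: these are rational identities that follow from the lattice
  equations at \<open>(n,m)\<close> and \<open>(n\<plusminus>1,m)\<close> after clearing denominators. Hence the two parts
  cancel and the flow is a symmetry. The extended flow is the symmetry flow weighted by
  the first lattice coordinate; this weight multiplies the linearisation by \<open>n\<close> and adds
  the shifted part once more, which is exactly what \<open>\<partial>\<^sub>\<alpha>Q\<close> compensates.\<close>

text \<open>Variables are named after lattice offsets: \<open>u01\<close> is \<open>u\<^sub>0\<^sub>,\<^sub>1\<close>, \<open>um1\<close> is
  \<open>u\<^sub>-\<^sub>1\<^sub>,\<^sub>1\<close>, \<open>um\<close> is \<open>u\<^sub>-\<^sub>1\<^sub>,\<^sub>0\<close>, and \<open>w\<close> stands for \<open>v\<close>.\<close>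

lemma forward_identity_u:
  fixes c u0 u01 u10 w11 w20 w21 :: real
  assumes "(u10 - u01) * (1 + u0 * w11) = c * u0" and "(w20 - w11) * (1 + u10 * w21) = - c * w21"
    and "1 + u10 * w21 \<noteq> 0" and "1 + u0 * w11 \<noteq> 0" and "1 + u0 * w20 \<noteq> 0" and "1 + u01 * w21 \<noteq> 0"
  shows "u0 / (1 + u0 * w20) + c * u0^2 / (1 + u0 * w11)^2 * (- w21 / (1 + u01 * w21))
    = u0 / (1 + u0 * w11)"
proof -
  have "u0 * (1 + u0 * w11)^2 * (1 + u01 * w21) - c * u0^2 * w21 * (1 + u0 * w20)
      = u0 * (1 + u0 * w11) * (1 + u0 * w20) * (1 + u01 * w21)"
    using assms(1-3) by algebra
  with assms(4-6) show ?thesis by (simp add: divide_simps) algebra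
qed

lemma forward_identity_v:
  fixes c u0 u01 u10 w11 w20 w21 :: real
  assumes "(u10 - u01) * (1 + u0 * w11) = c * u0" and "(w20 - w11) * (1 + u10 * w21) = - c * w21"
    and "1 + u10 * w21 \<noteq> 0" and "1 + u0 * w11 \<noteq> 0" and "1 + u0 * w20 \<noteq> 0" and "1 + u01 * w21 \<noteq> 0"
  shows "- w20 / (1 + u0 * w20) + c / (1 + u0 * w11)^2 * (- w21 / (1 + u01 * w21))
    = - w11 / (1 + u0 * w11)"
proof -
  have "w20 * (1 + u0 * w11)^2 * (1 + u01 * w21) + c * w21 * (1 + u0 * w20)
      = w11 * (1 + u0 * w11) * (1 + u0 * w20) * (1 + u01 * w21)"
    using assms(1-3) by algebra
  with assms(4-6) show ?thesis by (simp add: divide_simps) algebra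
qed

lemma backward_identity_u:
  fixes c u0 um um1 w01 w10 w11 :: real
  assumes "(u0 - um1) * (1 + um * w01) = c * um" and "(w10 - w01) * (1 + u0 * w11) = - c * w11"
    and "1 + um * w01 \<noteq> 0" and "1 + u0 * w11 \<noteq> 0" and "1 + um * w10 \<noteq> 0" and "1 + um1 * w11 \<noteq> 0"
  shows "um1 / (1 + um1 * w11) + c / (1 + u0 * w11)^2 * (um / (1 + um * w10))
    = u0 / (1 + u0 * w11)"
proof -
  have "um1 * (1 + u0 * w11)^2 * (1 + um * w10) + c * um * (1 + um1 * w11)
      = u0 * (1 + u0 * w11) * (1 + um * w10) * (1 + um1 * w11)"
    using assms(1-3) by algebra
  with assms(4-6) show ?thesis by (simp add: divide_simps) algebra
qed

lemma backward_identity_v: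
  fixes c u0 um um1 w01 w10 w11 :: real
  assumes "(u0 - um1) * (1 + um * w01) = c * um" and "(w10 - w01) * (1 + u0 * w11) = - c * w11"
    and "1 + um * w01 \<noteq> 0" and "1 + u0 * w11 \<noteq> 0" and "1 + um * w10 \<noteq> 0" and "1 + um1 * w11 \<noteq> 0"
  shows "- w11 / (1 + um1 * w11) + c * w11^2 / (1 + u0 * w11)^2 * (um / (1 + um * w10))
    = - w11 / (1 + u0 * w11)"
proof -
  have "w11 * (1 + u0 * w11)^2 * (1 + um * w10) - c * w11^2 * um * (1 + um1 * w11)
      = w11 * (1 + u0 * w11) * (1 + um * w10) * (1 + um1 * w11)"
    using assms(1-3) by algebra
  with assms(4-6) show ?thesis by (simp add: divide_simps) algebra
qed

lemma Q1_jacobian: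
  assumes "1 + U (n,m) * V (n+1,m+1) \<noteq> 0"
  shows "dQ_du 0 a b U V n m 0 0 = - ((a - b) / (1 + U (n,m) * V (n+1,m+1))^2)"
    and "dQ_du 0 a b U V n m 1 0 = 1" and "dQ_du 0 a b U V n m 0 1 = -1"
    and "dQ_du 0 a b U V n m 1 1 = 0"
    and "dQ_dv 0 a b U V n m 0 0 = 0" and "dQ_dv 0 a b U V n m 1 0 = 0"
    and "dQ_dv 0 a b U V n m 0 1 = 0"
    and "dQ_dv 0 a b U V n m 1 1 = (a - b) * U (n,m)^2 / (1 + U (n,m) * V (n+1,m+1))^2"
    and "dQ_dalpha 0 a b U V n m = - U (n,m) / (1 + U (n,m) * V (n+1,m+1))"
  unfolding dQ_du_def dQ_dv_def dQ_dalpha_def Qc_def Q1_def using assms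
  by (auto intro!: DERIV_imp_deriv derivative_eq_intros)
    (simp_all add: power2_eq_square divide_simps algebra_simps)

lemma Q2_jacobian:
  assumes "1 + U (n,m) * V (n+1,m+1) \<noteq> 0"
  shows "dQ_du 1 a b U V n m 0 0 = - ((a - b) * V (n+1,m+1)^2 / (1 + U (n,m) * V (n+1,m+1))^2)"
    and "dQ_du 1 a b U V n m 1 0 = 0" and "dQ_du 1 a b U V n m 0 1 = 0"
    and "dQ_du 1 a b U V n m 1 1 = 0"
    and "dQ_dv 1 a b U V n m 0 0 = 0" and "dQ_dv 1 a b U V n m 1 0 = 1"
    and "dQ_dv 1 a b U V n m 0 1 = -1"
    and "dQ_dv 1 a b U V n m 1 1 = (a - b) / (1 + U (n,m) * V (n+1,m+1))^2"
    and "dQ_dalpha 1 a b U V n m = V (n+1,m+1) / (1 + U (n,m) * V (n+1,m+1))"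
  unfolding dQ_du_def dQ_dv_def dQ_dalpha_def Qc_def Q2_def using assms
  by (auto intro!: DERIV_imp_deriv derivative_eq_intros)
    (simp_all add: power2_eq_square divide_simps algebra_simps)

text \<open>The weight \<open>k\<close> of the extended flow only sees the first shift \<open>p\<close> of each
  Jacobian \<open>Q\<^sub>(\<^sub>p\<^sub>,\<^sub>q\<^sub>)\<close>, whence this splitting.\<close>

definition linQ_fwd :: "nat \<Rightarrow> real \<Rightarrow> real \<Rightarrow> (int \<times> int \<Rightarrow> real) \<Rightarrow> (int \<times> int \<Rightarrow> real)
     \<Rightarrow> (int \<times> int \<Rightarrow> real) \<Rightarrow> (int \<times> int \<Rightarrow> real) \<Rightarrow> int \<Rightarrow> int \<Rightarrow> real" where
  "linQ_fwd i a b U V F G n m =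
     dQ_du i a b U V n m 1 0 * F (n+1,m) + dQ_dv i a b U V n m 1 0 * G (n+1,m)
   + dQ_du i a b U V n m 1 1 * F (n+1,m+1) + dQ_dv i a b U V n m 1 1 * G (n+1,m+1)"

definition linQ_bwd :: "nat \<Rightarrow> real \<Rightarrow> real \<Rightarrow> (int \<times> int \<Rightarrow> real) \<Rightarrow> (int \<times> int \<Rightarrow> real)
     \<Rightarrow> (int \<times> int \<Rightarrow> real) \<Rightarrow> (int \<times> int \<Rightarrow> real) \<Rightarrow> int \<Rightarrow> int \<Rightarrow> real" where
  "linQ_bwd i a b U V F G n m =
     dQ_du i a b U V n m 0 0 * F (n,m) + dQ_dv i a b U V n m 0 0 * G (n,m)
   + dQ_du i a b U V n m 0 1 * F (n,m+1) + dQ_dv i a b U V n m 0 1 * G (n,m+1)"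

lemma linQ_eq_fwd_add_bwd:
  "linQ i a b U V F G n m = linQ_fwd i a b U V F G n m + linQ_bwd i a b U V F G n m"
  unfolding linQ_def linQ_fwd_def linQ_bwd_def by simp

lemma linQ_weighted_by_first_coordinate:
  "linQ i a b U V (\<lambda>(k,l). of_int k * F (k,l)) (\<lambda>(k,l). of_int k * G (k,l)) n m
     = of_int n * linQ i a b U V F G n m + linQ_fwd i a b U V F G n m"
  unfolding linQ_def linQ_fwd_def by (simp add: algebra_simps)

lemma is_solution_cleared:
  assumes "is_solution a b U V"
  shows "1 + U (n,m) * V (n+1,m+1) \<noteq> 0"
    and "(U (n+1,m) - U (n,m+1)) * (1 + U (n,m) * V (n+1,m+1)) = (a - b) * U (n,m)"
    and "(V (n+1,m) - V (n,m+1)) * (1 + U (n,m) * V (n+1,m+1)) = - (a - b) * V (n+1,m+1)"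
proof -
  from assms have "Q1 a b U V n m = 0" and "Q2 a b U V n m = 0"
    and "1 + U (n,m) * V (n+1,m+1) \<noteq> 0"
    unfolding is_solution_def by blast+
  then show "1 + U (n,m) * V (n+1,m+1) \<noteq> 0"
    and "(U (n+1,m) - U (n,m+1)) * (1 + U (n,m) * V (n+1,m+1)) = (a - b) * U (n,m)"
    and "(V (n+1,m) - V (n,m+1)) * (1 + U (n,m) * V (n+1,m+1)) = - (a - b) * V (n+1,m+1)"
    unfolding Q1_def Q2_def by (simp_all add: field_simps)
qed

lemma symF_linQ_fwd:
  assumes sol: "is_solution a b U V" and nz: "\<forall>k l. 1 + U (k-1, l) * V (k+1, l) \<noteq> 0"
    and i: "i \<in> {0,1}"
  shows "linQ_fwd i a b U V (symF_u U V) (symF_v U V) n m = - dQ_dalpha i a b U V n m"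
proof -
  note here = is_solution_cleared[OF sol, of n m]
  note ahead = is_solution_cleared[OF sol, of "n+1" m, unfolded add.assoc one_add_one]
  have nz': "1 + U (n,m) * V (n+2,m) \<noteq> 0" "1 + U (n,m+1) * V (n+2,m+1) \<noteq> 0"
    using nz[rule_format, of "n+1" m] nz[rule_format, of "n+1" "m+1"] by (simp_all add: add.assoc)
  have flow: "symF_u U V (n+1,m) = U (n,m) / (1 + U (n,m) * V (n+2,m))"
    "symF_v U V (n+1,m) = - V (n+2,m) / (1 + U (n,m) * V (n+2,m))"
    "symF_v U V (n+1,m+1) = - V (n+2,m+1) / (1 + U (n,m+1) * V (n+2,m+1))"
    unfolding symF_u_def symF_v_def by (simp_all add: add.assoc)
  from i consider "i = 0" | "i = 1" by blast
  then show ?thesis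
  proof cases
    case 1
    show ?thesis unfolding 1 using forward_identity_u[OF here(2) ahead(3) ahead(1) here(1) nz']
      by (simp add: linQ_fwd_def flow Q1_jacobian here(1))
  next
    case 2
    \<comment> \<open>the simplifier would rewrite the index \<open>1\<close> to \<open>Suc 0\<close> before \<open>Q2_jacobian\<close> applies\<close>
    show ?thesis unfolding 2 using forward_identity_v[OF here(2) ahead(3) ahead(1) here(1) nz']
      by (simp add: linQ_fwd_def flow Q2_jacobian here(1) del: One_nat_def)
  qed
qed

lemma symF_linQ_bwd:
  assumes sol: "is_solution a b U V" and nz: "\<forall>k l. 1 + U (k-1, l) * V (k+1, l) \<noteq> 0"
    and i: "i \<in> {0,1}"
  shows "linQ_bwd i a b U V (symF_u U V) (symF_v U V) n m = dQ_dalpha i a b U V n m"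
proof -
  note here = is_solution_cleared[OF sol, of n m]
  note behind = is_solution_cleared[OF sol, of "n-1" m, simplified]
  have nz': "1 + U (n-1,m) * V (n+1,m) \<noteq> 0" "1 + U (n-1,m+1) * V (n+1,m+1) \<noteq> 0"
    using nz by blast+
  have flow: "symF_u U V (n,m) = U (n-1,m) / (1 + U (n-1,m) * V (n+1,m))"
    "symF_v U V (n,m) = - V (n+1,m) / (1 + U (n-1,m) * V (n+1,m))"
    "symF_u U V (n,m+1) = U (n-1,m+1) / (1 + U (n-1,m+1) * V (n+1,m+1))"
    "symF_v U V (n,m+1) = - V (n+1,m+1) / (1 + U (n-1,m+1) * V (n+1,m+1))"
    unfolding symF_u_def symF_v_def by simp_all
  from i consider "i = 0" | "i = 1" by blast
  then show ?thesis
  proof cases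
    case 1
    show ?thesis unfolding 1 using backward_identity_u[OF behind(2) here(3) behind(1) here(1) nz']
      by (simp add: linQ_bwd_def flow Q1_jacobian here(1))
  next
    case 2
    show ?thesis unfolding 2 using backward_identity_v[OF behind(2) here(3) behind(1) here(1) nz']
      by (simp add: linQ_bwd_def flow Q2_jacobian here(1) del: One_nat_def)
  qed
qed

lemma extM_eq_weighted_symF:
  "extM_u U V = (\<lambda>(k,l). of_int k * symF_u U V (k,l))"
  "extM_v U V = (\<lambda>(k,l). of_int k * symF_v U V (k,l))"
  unfolding extM_u_def extM_v_def symF_u_def symF_v_def by auto

theorem mainTheorem6:
  fixes \<alpha> \<beta> :: real
  assumes "\<alpha> \<noteq> \<beta>"
  shows "\<forall>U V. is_solution \<alpha> \<beta> U V
           \<longrightarrow> (\<forall>k l. 1 + U (k-1, l) * V (k+1, l) \<noteq> 0)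
           \<longrightarrow> (\<forall>n m. \<forall>i\<in>{0,1}.
                  linQ i \<alpha> \<beta> U V (symF_u U V) (symF_v U V) n m = 0
                \<and> linQ i \<alpha> \<beta> U V (extM_u U V) (extM_v U V) n m
                    + 1 * dQ_dalpha i \<alpha> \<beta> U V n m = 0)"
\<comment> \<open>the identities hold for \<open>\<alpha> = \<beta>\<close> as well\<close>
proof (intro allI impI ballI)
  fix U V n m and i :: nat
  assume sol: "is_solution \<alpha> \<beta> U V" and nz: "\<forall>k l. 1 + U (k-1, l) * V (k+1, l) \<noteq> 0"
    and i: "i \<in> {0,1}"
  note fwd = symF_linQ_fwd[OF sol nz i, of n m] and bwd = symF_linQ_bwd[OF sol nz i, of n m]
  have symmetry: "linQ i \<alpha> \<beta> U V (symF_u U V) (symF_v U V) n m = 0"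
    by (simp add: linQ_eq_fwd_add_bwd fwd bwd)
  moreover have "linQ i \<alpha> \<beta> U V (extM_u U V) (extM_v U V) n m + 1 * dQ_dalpha i \<alpha> \<beta> U V n m = 0"
    by (simp add: extM_eq_weighted_symF linQ_weighted_by_first_coordinate symmetry fwd)
  ultimately show "linQ i \<alpha> \<beta> U V (symF_u U V) (symF_v U V) n m = 0
    \<and> linQ i \<alpha> \<beta> U V (extM_u U V) (extM_v U V) n m + 1 * dQ_dalpha i \<alpha> \<beta> U V n m = 0" ..
qed

end
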